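(* If $\mathbb{K}=(K,+,0)$ is a positive commutative monoid that is weakly cancellative and totally canonically pre-ordered, then the inner consistency property holds for $\mathbb{K}$-relations via the northwest corner method: for any two $\mathbb{K}$-relations $R(X)$, $S(Y)$ with $R[X\cap Y]=S[X\cap Y]$, the northwest corner procedure can be carried out and every northwest corner join $W$ for $R$ and $S$ satisfies $W[X]=R$ and $W[Y]=S$.
   Context: Positive: $p+q=0\Rightarrow p=q=0$. Canonical pre-order: $b\sqsubseteq c$ iff $b+a=c$ for some $a$. Weakly cancellative: $a+b=a+c$ implies $b=c$ or $b=0$ or $c=0$. Totally canonically pre-ordered: $b\sqsubseteq c$ or $c\sqsubseteq b$ for all $b,c$. $\mathbb{K}$-relations: for a finite attribute set $X$ (attributes have domains), a $\mathbb{K}$-relation over $X$ is a finitely supported map $R$ from $X$-tuples (assignments of domain values to attributes) to $K$, support $R'$; $t[Y]$ is restriction; marginals $R[Y](t)=\sum_{r\in R',r[Y]=t}R(r)$. Northwest corner method on a balanced instance $b\in K^m$, $c\in K^n$ ($\sum b_i=\sum c_j$), producing $x_{ij}\in K$: first, for each $i$ with $b_i=0$ set row $i$ of $x$ to $0$ and delete it, likewise for columns with $c_j=0$. If $m=1$ set $x_{1j}=c_j$; if $n=1$ set $x_{i1}=b_i$. Otherwise: if $b_1=c_1$, set $x_{11}=b_1$, the other entries of row 1 and column 1 to $0$, and recurse on $(b_2,\dots,b_m),(c_2,\dots,c_n)$; else if $b_1\sqsubseteq c_1$, choose $a$ with $b_1+a=c_1$, set $x_{11}=b_1$ and $x_{1j}=0$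 for $j\ge2$, and recurse on rows $2..m$ with $(b_2,\dots,b_m)$ and $(a,c_2,\dots,c_n)$; else ($c_1\sqsubseteq b_1$) symmetrically with rows and columns exchanged. A northwest corner join for inner consistent $R(X),S(Y)$ with $Z=X\cap Y$: for each $Z$-tuple $w$ in the support of $R[Z]$, enumerate in any order the $X$-tuples $u_1,\dots,u_p\in R'$ with $u_i[Z]=w$ and the $Y$-tuples $v_1,\dots,v_q\in S'$ with $v_j[Z]=w$, apply the method to $b=(R(u_i))_i$, $c=(S(v_j))_j$, and set $W(u_iv_j)=x_{ij}$ (where $u_iv_j$ is the $X\cup Y$-tuple agreeing with both); $W$ is $0$ on all other $X\cup Y$-tuples. *)

theory Defs
  imports Main
begin

definition positive_monoid :: "'k::comm_monoid_add itself \<Rightarrow> bool" where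
  "positive_monoid _ \<longleftrightarrow> (\<forall>p q::'k. p + q = 0 \<longrightarrow> p = 0 \<and> q = 0)"

definition canon_le :: "'k::comm_monoid_add \<Rightarrow> 'k \<Rightarrow> bool" where
  "canon_le b c \<longleftrightarrow> (\<exists>a. b + a = c)"

definition weakly_cancellative :: "'k::comm_monoid_add itself \<Rightarrow> bool" where
  "weakly_cancellative _ \<longleftrightarrow>
     (\<forall>a b c::'k. a + b = a + c \<longrightarrow> b = c \<or> b = 0 \<or> c = 0)"

definition totally_canon_preordered :: "'k::comm_monoid_add itself \<Rightarrow> bool" where
  "totally_canon_preordered _ \<longleftrightarrow> (\<forall>b c::'k. canon_le b c \<or> canon_le c b)"

text \<open>Instances are lists of labelled entries (label, value); the output matrix
  is indexed by labels. A row/column keeps its label when its value is replaced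
  by the residual a. The relation nwc b c x holds iff x is a possible output
  of the (nondeterministic: choice of a) northwest corner method on b, c.\<close>

inductive nwc :: "('i \<times> 'k::comm_monoid_add) list \<Rightarrow> ('j \<times> 'k) list \<Rightarrow> ('i \<Rightarrow> 'j \<Rightarrow> 'k) \<Rightarrow> bool"
where
  zero_del:
    "(\<exists>p\<in>set b. snd p = 0) \<or> (\<exists>p\<in>set c. snd p = 0) \<Longrightarrow>
     nwc (filter (\<lambda>p. snd p \<noteq> 0) b) (filter (\<lambda>p. snd p \<noteq> 0) c) x \<Longrightarrow>
     nwc b c (\<lambda>i j. if i \<in> fst ` {p\<in>set b. snd p = 0} \<or> j \<in> fst ` {p\<in>set c. snd p = 0}
                    then 0 else x i j)"
| empty: "nwc [] [] (\<lambda>i j. 0)"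
| one_row:
    "\<forall>p\<in>set c. snd p \<noteq> 0 \<Longrightarrow> snd b1 \<noteq> 0 \<Longrightarrow>
     nwc [b1] c (\<lambda>i j. if i = fst b1 then (case map_of c j of Some v \<Rightarrow> v | None \<Rightarrow> 0) else 0)"
| one_col:
    "\<forall>p\<in>set b. snd p \<noteq> 0 \<Longrightarrow> snd c1 \<noteq> 0 \<Longrightarrow> length b \<noteq> 1 \<Longrightarrow>
     nwc b [c1] (\<lambda>i j. if j = fst c1 then (case map_of b i of Some v \<Rightarrow> v | None \<Rightarrow> 0) else 0)"
| equal:
    "\<forall>p\<in>set (b1 # bs). snd p \<noteq> 0 \<Longrightarrow> \<forall>p\<in>set (c1 # cs). snd p \<noteq> 0 \<Longrightarrow>
     bs \<noteq> [] \<Longrightarrow> cs \<noteq> [] \<Longrightarrow> snd b1 = snd c1 \<Longrightarrow>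
     nwc bs cs x \<Longrightarrow>
     nwc (b1 # bs) (c1 # cs)
       (\<lambda>i j. if i = fst b1 \<and> j = fst c1 then snd b1
              else if i = fst b1 \<or> j = fst c1 then 0 else x i j)"
| row_first:
    "\<forall>p\<in>set (b1 # bs). snd p \<noteq> 0 \<Longrightarrow> \<forall>p\<in>set (c1 # cs). snd p \<noteq> 0 \<Longrightarrow>
     bs \<noteq> [] \<Longrightarrow> cs \<noteq> [] \<Longrightarrow> snd b1 \<noteq> snd c1 \<Longrightarrow>
     snd b1 + a = snd c1 \<Longrightarrow>
     nwc bs ((fst c1, a) # cs) x \<Longrightarrow>
     nwc (b1 # bs) (c1 # cs)
       (\<lambda>i j. if i = fst b1 then (if j = fst c1 then snd b1 else 0) else x i j)"
| col_first:
    "\<forall>p\<in>set (b1 # bs). snd p \<noteq> 0 \<Longrightarrow> \<forall>p\<in>set (c1 # cs). snd p \<noteq> 0 \<Longrightarrow>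
     bs \<noteq> [] \<Longrightarrow> cs \<noteq> [] \<Longrightarrow> snd b1 \<noteq> snd c1 \<Longrightarrow>
     \<not> canon_le (snd b1) (snd c1) \<Longrightarrow>
     snd c1 + a = snd b1 \<Longrightarrow>
     nwc ((fst b1, a) # bs) cs x \<Longrightarrow>
     nwc (b1 # bs) (c1 # cs)
       (\<lambda>i j. if j = fst c1 then (if i = fst b1 then snd c1 else 0) else x i j)"

text \<open>Tuples are partial maps from attributes to values; D gives attribute domains.\<close>

definition is_tuple :: "('a \<Rightarrow> 'v set) \<Rightarrow> 'a set \<Rightarrow> ('a \<rightharpoonup> 'v) \<Rightarrow> bool" where
  "is_tuple D X t \<longleftrightarrow> dom t = X \<and> (\<forall>x\<in>X. the (t x) \<in> D x)"

definition supp :: "(('a \<rightharpoonup> 'v) \<Rightarrow> 'k::zero) \<Rightarrow> ('a \<rightharpoonup> 'v) set" where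
  "supp R = {t. R t \<noteq> 0}"

definition is_krel :: "('a \<Rightarrow> 'v set) \<Rightarrow> 'a set \<Rightarrow> (('a \<rightharpoonup> 'v) \<Rightarrow> 'k::zero) \<Rightarrow> bool" where
  "is_krel D X R \<longleftrightarrow> finite (supp R) \<and> (\<forall>t\<in>supp R. is_tuple D X t)"

definition marg :: "(('a \<rightharpoonup> 'v) \<Rightarrow> 'k::comm_monoid_add) \<Rightarrow> 'a set \<Rightarrow> ('a \<rightharpoonup> 'v) \<Rightarrow> 'k" where
  "marg R Y t = (\<Sum>r\<in>{r\<in>supp R. r |` Y = t}. R r)"

definition enumerates :: "(('a \<rightharpoonup> 'v) \<Rightarrow> 'k::zero) \<Rightarrow> 'a set \<Rightarrow> ('a \<rightharpoonup> 'v) \<Rightarrow> ('a \<rightharpoonup> 'v) list \<Rightarrow> bool" where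
  "enumerates R Z w us \<longleftrightarrow> distinct us \<and> set us = {u\<in>supp R. u |` Z = w}"

definition nwc_join ::
  "'a set \<Rightarrow> 'a set \<Rightarrow> (('a \<rightharpoonup> 'v) \<Rightarrow> 'k::comm_monoid_add) \<Rightarrow> (('a \<rightharpoonup> 'v) \<Rightarrow> 'k)
     \<Rightarrow> (('a \<rightharpoonup> 'v) \<Rightarrow> 'k) \<Rightarrow> bool" where
  "nwc_join X Y R S W \<longleftrightarrow>
     (\<exists>ul vl xs.
        (\<forall>w\<in>supp (marg R (X \<inter> Y)).
            enumerates R (X \<inter> Y) w (ul w) \<and> enumerates S (X \<inter> Y) w (vl w) \<and>
            nwc (map (\<lambda>u. (u, R u)) (ul w)) (map (\<lambda>v. (v, S v)) (vl w)) (xs w)) \<and>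
        (\<forall>t. W t =
            (if dom t = X \<union> Y \<and> t |` (X \<inter> Y) \<in> supp (marg R (X \<inter> Y))
                \<and> t |` X \<in> set (ul (t |` (X \<inter> Y))) \<and> t |` Y \<in> set (vl (t |` (X \<inter> Y)))
             then xs (t |` (X \<inter> Y)) (t |` X) (t |` Y) else 0)))"

end

theory Submission imports Defs begin

text \<open>
  Fix a tuple \<open>w\<close> in the support of the common marginal on \<open>X \<inter> Y\<close>. The values of \<open>R\<close> on
  the \<open>X\<close>-tuples above \<open>w\<close> and of \<open>S\<close> on the \<open>Y\<close>-tuples above \<open>w\<close> form a balanced
  transportation instance with non-zero entries. At a northwest corner step with \<open>b\<^sub>1 + a = c\<^sub>1\<close>,
  weak cancellation of \<open>b\<^sub>1\<close> in \<open>b\<^sub>1 + \<Sigma>b' = c\<^sub>1 + \<Sigma>c' = b\<^sub>1 + (a + \<Sigma>c')\<close> is allowed because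
  positivity makes both remaining totals non-zero; so the residual instance is again balanced.
  Since \<open>b\<^sub>1\<close> and \<open>c\<^sub>1\<close> are always comparable, some step applies, and by induction the method
  terminates with a matrix whose row and column sums are the given values. In the join \<open>W\<close>
  the tuples above an \<open>X\<close>-tuple \<open>u\<close> are the \<open>u ++ v\<close> with \<open>v\<close> in the same fibre, so
  \<open>W[X](u)\<close> is the row sum of \<open>u\<close>, i.e. \<open>R(u)\<close>; the case of \<open>Y\<close> is symmetric.
\<close>

lemma positive_add_eq_0_iff:
  assumes "positive_monoid TYPE('k::comm_monoid_add)"
  shows "(a::'k) + b = 0 \<longleftrightarrow> a = 0 \<and> b = 0"
  using assms unfolding positive_monoid_def by (metis add_0)

lemma positive_sum_list_eq_0_iff_Nil:
  assumes "positive_monoid TYPE('k::comm_monoid_add)" and "\<forall>x\<in>set xs. x \<noteq> (0::'k)"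
  shows "sum_list xs = 0 \<longleftrightarrow> xs = []"
  using assms(2) by (cases xs) (simp_all add: positive_add_eq_0_iff[OF assms(1)])

lemma positive_sum_eq_0_iff:
  assumes "positive_monoid TYPE('k::comm_monoid_add)" and "finite A"
  shows "sum (f::_ \<Rightarrow> 'k) A = 0 \<longleftrightarrow> (\<forall>x\<in>A. f x = 0)"
  using assms(2) by (induction A rule: finite_induct) (simp_all add: positive_add_eq_0_iff[OF assms(1)])

lemma weakly_cancellativeD:
  assumes "weakly_cancellative TYPE('k::comm_monoid_add)"
    and "(a::'k) + b = a + c" and "b \<noteq> 0" and "c \<noteq> 0"
  shows "b = c"
  using assms unfolding weakly_cancellative_def by blast

lemma residual_balance:
  assumes "positive_monoid TYPE('k::comm_monoid_add)" and "weakly_cancellative TYPE('k)"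
    and "(b::'k) + B = c + C" and "b + a = c" and "B \<noteq> 0" and "a \<noteq> 0"
  shows "B = a + C"
proof (rule weakly_cancellativeD[OF assms(2)])
  show "b + B = b + (a + C)" using assms(3) unfolding assms(4)[symmetric] by (simp add: add.assoc)
  show "a + C \<noteq> 0" using assms(6) positive_add_eq_0_iff[OF assms(1)] by blast
qed (fact assms(5))

definition has_margins ::
  "('i \<times> 'k) list \<Rightarrow> ('j \<times> 'k) list \<Rightarrow> ('i \<Rightarrow> 'j \<Rightarrow> 'k::comm_monoid_add) \<Rightarrow> bool" where
  "has_margins b c x \<longleftrightarrow>
     (\<forall>p\<in>set b. (\<Sum>q\<leftarrow>c. x (fst p) (fst q)) = snd p) \<and>
     (\<forall>q\<in>set c. (\<Sum>p\<leftarrow>b. x (fst p) (fst q)) = snd q)"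

lemma sum_list_map_of:
  assumes "distinct (map fst c)"
  shows "(\<Sum>q\<leftarrow>c. case map_of c (fst q) of Some v \<Rightarrow> v | None \<Rightarrow> 0) = (\<Sum>q\<leftarrow>c. snd q)"
proof -
  have "map (\<lambda>q. case map_of c (fst q) of Some v \<Rightarrow> v | None \<Rightarrow> 0) c = map snd c"
    using assms by (intro map_cong) auto
  then show ?thesis by (rule arg_cong)
qed

lemma nwc_has_margins:
  assumes P: "positive_monoid TYPE('k::comm_monoid_add)" and WC: "weakly_cancellative TYPE('k)"
  shows "nwc b c (x::'i \<Rightarrow> 'j \<Rightarrow> 'k) \<Longrightarrow> \<forall>p\<in>set b. snd p \<noteq> 0 \<Longrightarrow> \<forall>p\<in>set c. snd p \<noteq> 0 \<Longrightarrow>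
    distinct (map fst b) \<Longrightarrow> distinct (map fst c) \<Longrightarrow> sum_list (map snd b) = sum_list (map snd c) \<Longrightarrow>
    has_margins b c x"
proof (induction rule: nwc.induct)
  case (zero_del b c x)
  then show ?case by auto
next
  case empty
  then show ?case by (simp add: has_margins_def)
next
  case (one_row c b1)
  then show ?case by (auto simp: has_margins_def sum_list_map_of)
next
  case (one_col b c1)
  then show ?case by (auto simp: has_margins_def sum_list_map_of)
next
  case (equal b1 bs c1 cs x)
  have nz: "sum_list (map snd bs) \<noteq> 0" "sum_list (map snd cs) \<noteq> 0"
    using equal.hyps(1-4) by (simp_all add: positive_sum_list_eq_0_iff_Nil[OF P])
  have "sum_list (map snd bs) = sum_list (map snd cs)"
    using equal.prems(5) equal.hyps(5) weakly_cancellativeD[OF WC _ nz] by simp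
  then have "has_margins bs cs x"
    using equal.IH equal.prems(1-4) by simp
  moreover have "\<forall>p\<in>set bs. fst p \<noteq> fst b1" and "\<forall>q\<in>set cs. fst q \<noteq> fst c1"
    using equal.prems(3,4) by (auto simp: rev_image_eqI)
  ultimately show ?case using equal.hyps unfolding has_margins_def by (simp cong: map_cong)
next
  case (row_first b1 bs c1 cs a x)
  have "a \<noteq> 0" using row_first.hyps(5,6) by auto
  moreover have "sum_list (map snd bs) \<noteq> 0"
    using row_first.hyps(1,3) by (simp add: positive_sum_list_eq_0_iff_Nil[OF P])
  ultimately have "sum_list (map snd bs) = a + sum_list (map snd cs)"
    using residual_balance[OF P WC _ row_first.hyps(6)] row_first.prems(5) by simp
  then have "has_margins bs ((fst c1, a) # cs) x"
    using row_first.IH row_first.prems(1-4) \<open>a \<noteq> 0\<close> by simp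
  moreover have "\<forall>p\<in>set bs. fst p \<noteq> fst b1" and "\<forall>q\<in>set cs. fst q \<noteq> fst c1"
    using row_first.prems(3,4) by (auto simp: rev_image_eqI)
  ultimately show ?case using row_first.hyps unfolding has_margins_def by (simp cong: map_cong)
next
  case (col_first b1 bs c1 cs a x)
  have "a \<noteq> 0" using col_first.hyps(5,7) by auto
  moreover have "sum_list (map snd cs) \<noteq> 0"
    using col_first.hyps(2,4) by (simp add: positive_sum_list_eq_0_iff_Nil[OF P])
  ultimately have "sum_list (map snd cs) = a + sum_list (map snd bs)"
    using residual_balance[OF P WC _ col_first.hyps(7)] col_first.prems(5) by simp
  then have "has_margins ((fst b1, a) # bs) cs x"
    using col_first.IH col_first.prems(1-4) \<open>a \<noteq> 0\<close> by simp
  moreover have "\<forall>p\<in>set bs. fst p \<noteq> fst b1" and "\<forall>q\<in>set cs. fst q \<noteq> fst c1"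
    using col_first.prems(3,4) by (auto simp: rev_image_eqI)
  ultimately show ?case using col_first.hyps unfolding has_margins_def by (simp cong: map_cong)
qed

lemma nwc_corner_cases:
  assumes P: "positive_monoid TYPE('k::comm_monoid_add)" and WC: "weakly_cancellative TYPE('k)"
    and T: "totally_canon_preordered TYPE('k)"
    and nz: "\<forall>p\<in>set bs. snd p \<noteq> (0::'k)" "\<forall>p\<in>set cs. snd p \<noteq> 0" "bs \<noteq> []" "cs \<noteq> []"
    and bal: "snd b1 + sum_list (map snd bs) = snd c1 + sum_list (map snd cs)"
  obtains (equal) "snd b1 = snd c1" "sum_list (map snd bs) = sum_list (map snd cs)"
    | (row_first) a where "snd b1 \<noteq> snd c1" "snd b1 + a = snd c1" "a \<noteq> 0"
        "sum_list (map snd bs) = sum_list (map snd ((fst c1, a) # cs))"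
    | (col_first) a where "snd b1 \<noteq> snd c1" "\<not> canon_le (snd b1) (snd c1)" "snd c1 + a = snd b1"
        "a \<noteq> 0" "sum_list (map snd ((fst b1, a) # bs)) = sum_list (map snd cs)"
proof -
  have sums: "sum_list (map snd bs) \<noteq> 0" "sum_list (map snd cs) \<noteq> 0"
    using nz by (simp_all add: positive_sum_list_eq_0_iff_Nil[OF P])
  consider "snd b1 = snd c1" | a where "snd b1 \<noteq> snd c1" "snd b1 + a = snd c1"
    | a where "snd b1 \<noteq> snd c1" "\<not> canon_le (snd b1) (snd c1)" "snd c1 + a = snd b1"
    using T unfolding totally_canon_preordered_def canon_le_def by blast
  then show ?thesis
  proof cases
    case 1
    then show ?thesis using equal bal weakly_cancellativeD[OF WC _ sums] by simp
  next
    case (2 a)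
    then have "a \<noteq> 0" by auto
    then show ?thesis using row_first 2 residual_balance[OF P WC bal 2(2) sums(1)] by simp
  next
    case (3 a)
    then have "a \<noteq> 0" by auto
    then show ?thesis using col_first 3 residual_balance[OF P WC bal[symmetric] 3(3) sums(2)] by simp
  qed
qed

lemma nwc_exists:
  assumes P: "positive_monoid TYPE('k::comm_monoid_add)" and WC: "weakly_cancellative TYPE('k)"
    and T: "totally_canon_preordered TYPE('k)"
  shows "\<forall>p\<in>set b. snd p \<noteq> (0::'k) \<Longrightarrow> \<forall>p\<in>set c. snd p \<noteq> 0 \<Longrightarrow>
    sum_list (map snd b) = sum_list (map snd c) \<Longrightarrow> \<exists>x. nwc b c x"
proof (induction "length b + length c" arbitrary: b c rule: less_induct)
  case less
  have "b = [] \<longleftrightarrow> c = []"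
    using less.prems positive_sum_list_eq_0_iff_Nil[OF P, of "map snd b"]
      positive_sum_list_eq_0_iff_Nil[OF P, of "map snd c"] by simp
  then consider (empty) "b = []" "c = []" | (one_row) b1 where "b = [b1]"
    | (one_col) b1 bs c1 where "b = b1 # bs" "bs \<noteq> []" "c = [c1]"
    | (corner) b1 bs c1 cs where "b = b1 # bs" "c = c1 # cs" "bs \<noteq> []" "cs \<noteq> []"
    by (metis neq_Nil_conv)
  then show ?case
  proof cases
    case empty
    then show ?thesis using nwc.empty by blast
  next
    case (one_row b1)
    then show ?thesis using nwc.one_row[of c b1] less.prems(1,2) by auto
  next
    case (one_col b1 bs c1)
    then show ?thesis using nwc.one_col[of b c1] less.prems(1,2) by auto
  next
    case (corner b1 bs c1 cs)
    have prems': "\<forall>p\<in>set bs. snd p \<noteq> 0" "\<forall>p\<in>set cs. snd p \<noteq> 0"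
      using less.prems(1,2) corner by simp_all
    have bal: "snd b1 + sum_list (map snd bs) = snd c1 + sum_list (map snd cs)"
      using less.prems(3) corner by simp
    show ?thesis
    proof (cases rule: nwc_corner_cases[OF P WC T prems' corner(3,4) bal, case_names equal row_first col_first])
      case equal
      then obtain x where "nwc bs cs x" using less.hyps[of bs cs] prems' corner by auto
      then show ?thesis using nwc.equal[of b1 bs c1 cs x] equal less.prems(1,2) corner by auto
    next
      case (row_first a)
      then obtain x where "nwc bs ((fst c1, a) # cs) x"
        using less.hyps[of bs "(fst c1, a) # cs"] prems' corner by auto
      then show ?thesis using nwc.row_first[of b1 bs c1 cs a x] row_first less.prems(1,2) corner by auto
    next
      case (col_first a)
      then obtain x where "nwc ((fst b1, a) # bs) cs x"
        using less.hyps[of "(fst b1, a) # bs" cs] prems' corner by auto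
      then show ?thesis using nwc.col_first[of b1 bs c1 cs a x] col_first less.prems(1,2) corner by auto
    qed
  qed
qed

lemma sum_list_enumerates:
  "enumerates R Z w us \<Longrightarrow> (\<Sum>u\<leftarrow>us. R u) = marg R Z w"
  unfolding enumerates_def marg_def by (simp add: sum_list_distinct_conv_sum_set)

lemma enumerates_labelled:
  assumes "enumerates R Z w us"
  shows "\<forall>p\<in>set (map (\<lambda>u. (u, R u)) us). snd p \<noteq> 0" and "distinct (map fst (map (\<lambda>u. (u, R u)) us))"
    and "sum_list (map snd (map (\<lambda>u. (u, R u)) us)) = marg R Z w"
  using assms sum_list_enumerates[OF assms] by (auto simp: enumerates_def supp_def o_def)

lemma fibre_nwc_exists:
  assumes "positive_monoid TYPE('k::comm_monoid_add)" and "weakly_cancellative TYPE('k)"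
    and "totally_canon_preordered TYPE('k)"
    and "marg R Z = marg (S :: _ \<Rightarrow> 'k) Z" and "enumerates R Z w us" and "enumerates S Z w vs"
  shows "\<exists>x. nwc (map (\<lambda>u. (u, R u)) us) (map (\<lambda>v. (v, S v)) vs) x"
proof (rule nwc_exists[OF assms(1-3)])
  show "sum_list (map snd (map (\<lambda>u. (u, R u)) us)) = sum_list (map snd (map (\<lambda>v. (v, S v)) vs))"
    using enumerates_labelled(3)[OF assms(5)] enumerates_labelled(3)[OF assms(6)] assms(4) by simp
qed (fact enumerates_labelled(1)[OF assms(5)] enumerates_labelled(1)[OF assms(6)])+

lemma fibre_nwc_has_margins:
  assumes "positive_monoid TYPE('k::comm_monoid_add)" and "weakly_cancellative TYPE('k)"
    and "marg R Z = marg (S :: _ \<Rightarrow> 'k) Z" and "enumerates R Z w us" and "enumerates S Z w vs"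
    and "nwc (map (\<lambda>u. (u, R u)) us) (map (\<lambda>v. (v, S v)) vs) x"
  shows "(\<forall>u\<in>set us. (\<Sum>v\<leftarrow>vs. x u v) = R u) \<and> (\<forall>v\<in>set vs. (\<Sum>u\<leftarrow>us. x u v) = S v)"
proof -
  have "has_margins (map (\<lambda>u. (u, R u)) us) (map (\<lambda>v. (v, S v)) vs) x"
    using enumerates_labelled[OF assms(4)] enumerates_labelled[OF assms(5)] assms(3)
    by (intro nwc_has_margins[OF assms(1,2,6)]) simp_all
  then show ?thesis by (simp add: has_margins_def o_def)
qed

lemma restrict_map_add_right: "dom v = Y \<Longrightarrow> (r ++ v) |` Y = v"
  by (auto simp: fun_eq_iff restrict_map_def map_add_def split: option.split)

lemma restrict_map_add_left:
  assumes "dom r = X" and "dom v = Y" and "r |` (X \<inter> Y) = v |` (X \<inter> Y)"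
  shows "(r ++ v) |` X = r"
proof
  fix a
  show "((r ++ v) |` X) a = r a"
  proof (cases "a \<in> X \<inter> Y")
    case True
    then show ?thesis using fun_cong[OF assms(3), of a] assms(2) by (auto simp: map_add_def)
  next
    case False
    then have "a \<notin> X \<or> v a = None" using assms(2) by auto
    then show ?thesis using assms(1) by (auto simp: map_add_def restrict_map_def)
  qed
qed

lemma restrict_map_add_restrict: "dom t \<subseteq> X \<union> Y \<Longrightarrow> t |` X ++ t |` Y = t"
  by (auto simp: fun_eq_iff restrict_map_def map_add_def split: option.split)

lemma marg_eq_sum_map_add:
  assumes "dom r = X" and "finite V" and V: "\<forall>v\<in>V. dom v = Y \<and> v |` (X \<inter> Y) = r |` (X \<inter> Y)"
    and W: "\<And>t. W t \<noteq> 0 \<Longrightarrow> t |` X = r \<Longrightarrow> dom t = X \<union> Y \<and> t |` Y \<in> V"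
  shows "marg W X r = (\<Sum>v\<in>V. W (r ++ v))"
proof -
  have restrict: "(r ++ v) |` X = r" "(r ++ v) |` Y = v" if "v \<in> V" for v
    using V that restrict_map_add_left[OF assms(1)] restrict_map_add_right by metis+
  have "inj_on ((++) r) V"
    by (rule inj_on_inverseI[where g = "\<lambda>t. t |` Y"]) (simp add: restrict)
  have "{t \<in> supp W. t |` X = r} \<subseteq> (++) r ` V"
  proof
    fix t assume "t \<in> {t \<in> supp W. t |` X = r}"
    then have "t |` X = r" and "dom t = X \<union> Y" and "t |` Y \<in> V" using W unfolding supp_def by auto
    then show "t \<in> (++) r ` V" using restrict_map_add_restrict[of t X Y] by force
  qed
  then have "marg W X r = sum W ((++) r ` V)"
    unfolding marg_def using restrict(1) \<open>finite V\<close> by (intro sum.mono_neutral_left) (auto simp: supp_def)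
  also have "\<dots> = (\<Sum>v\<in>V. W (r ++ v))"
    using sum.reindex[OF \<open>inj_on ((++) r) V\<close>] by simp
  finally show ?thesis .
qed

definition fibrewise_join ::
  "'a set \<Rightarrow> 'a set \<Rightarrow> ('a \<rightharpoonup> 'v) set \<Rightarrow> (('a \<rightharpoonup> 'v) \<Rightarrow> ('a \<rightharpoonup> 'v) list)
     \<Rightarrow> (('a \<rightharpoonup> 'v) \<Rightarrow> ('a \<rightharpoonup> 'v) list) \<Rightarrow> (('a \<rightharpoonup> 'v) \<Rightarrow> ('a \<rightharpoonup> 'v) \<Rightarrow> ('a \<rightharpoonup> 'v) \<Rightarrow> 'k::zero)
     \<Rightarrow> ('a \<rightharpoonup> 'v) \<Rightarrow> 'k" where
  "fibrewise_join X Y Ws ul vl xs t =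
     (if dom t = X \<union> Y \<and> t |` (X \<inter> Y) \<in> Ws
         \<and> t |` X \<in> set (ul (t |` (X \<inter> Y))) \<and> t |` Y \<in> set (vl (t |` (X \<inter> Y)))
      then xs (t |` (X \<inter> Y)) (t |` X) (t |` Y) else 0)"

lemma fibrewise_join_swap:
  "fibrewise_join X Y Ws ul vl xs = fibrewise_join Y X Ws vl ul (\<lambda>w v u. xs w u v)"
  by (auto simp: fun_eq_iff fibrewise_join_def Int_commute Un_commute)

lemma nwc_join_iff_fibrewise_join:
  "nwc_join X Y R S W \<longleftrightarrow>
     (\<exists>ul vl xs.
        (\<forall>w\<in>supp (marg R (X \<inter> Y)).
            enumerates R (X \<inter> Y) w (ul w) \<and> enumerates S (X \<inter> Y) w (vl w) \<and>
            nwc (map (\<lambda>u. (u, R u)) (ul w)) (map (\<lambda>v. (v, S v)) (vl w)) (xs w)) \<and>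
        W = fibrewise_join X Y (supp (marg R (X \<inter> Y))) ul vl xs)"
  by (simp add: nwc_join_def fibrewise_join_def fun_eq_iff)

lemma fibrewise_join_neq_0D:
  assumes "fibrewise_join X Y Ws ul vl xs t \<noteq> 0"
  shows "dom t = X \<union> Y" and "t |` (X \<inter> Y) \<in> Ws"
    and "t |` X \<in> set (ul (t |` (X \<inter> Y)))" and "t |` Y \<in> set (vl (t |` (X \<inter> Y)))"
  using assms unfolding fibrewise_join_def by (auto split: if_splits)

lemma fibrewise_join_map_add:
  assumes "dom u = X" and "dom v = Y" and "u |` (X \<inter> Y) = w" and "v |` (X \<inter> Y) = w"
    and "w \<in> Ws" and "u \<in> set (ul w)" and "v \<in> set (vl w)"
  shows "fibrewise_join X Y Ws ul vl xs (u ++ v) = xs w u v"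
proof -
  have uv: "(u ++ v) |` X = u" "(u ++ v) |` Y = v"
    using restrict_map_add_left[OF assms(1,2)] restrict_map_add_right[OF assms(2)] assms(3,4) by simp_all
  have "(u ++ v) |` (X \<inter> Y) = (u ++ v) |` X |` (X \<inter> Y)" by simp
  then have "(u ++ v) |` (X \<inter> Y) = w" unfolding uv(1) assms(3) .
  then show ?thesis using assms uv unfolding fibrewise_join_def by auto
qed

lemma marg_fibrewise_join:
  assumes "is_krel D X R" and "is_krel D Y S"
    and fibres: "\<forall>w\<in>Ws. enumerates R (X \<inter> Y) w (ul w) \<and> enumerates S (X \<inter> Y) w (vl w)
                      \<and> (\<forall>u\<in>set (ul w). (\<Sum>v\<leftarrow>vl w. xs w u v) = R u)"
    and covers: "\<forall>r. R r \<noteq> 0 \<longrightarrow> r |` (X \<inter> Y) \<in> Ws"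
  shows "marg (fibrewise_join X Y Ws ul vl xs) X = R"
proof
  fix r
  let ?W = "fibrewise_join X Y Ws ul vl xs"
  have fibre_supp: "set (ul w) \<subseteq> {u. R u \<noteq> 0 \<and> dom u = X \<and> u |` (X \<inter> Y) = w}"
    "set (vl w) \<subseteq> {v. S v \<noteq> 0 \<and> dom v = Y \<and> v |` (X \<inter> Y) = w}" if "w \<in> Ws" for w
    using fibres that assms(1,2) unfolding enumerates_def is_krel_def is_tuple_def supp_def by auto
  show "marg ?W X r = R r"
  proof (cases "R r = 0")
    case True
    have "R (t |` X) \<noteq> 0" if "?W t \<noteq> 0" for t
      using fibre_supp fibrewise_join_neq_0D[OF that] by blast
    then have "{t \<in> supp ?W. t |` X = r} = {}" using True unfolding supp_def by auto
    then show ?thesis unfolding marg_def using True by (simp only: sum.empty)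
  next
    case False
    define w where "w = r |` (X \<inter> Y)"
    have w: "w \<in> Ws" and "dom r = X" and r: "r \<in> set (ul w)"
      using covers False fibres assms(1) unfolding w_def enumerates_def is_krel_def is_tuple_def supp_def
      by auto
    have "marg ?W X r = (\<Sum>v\<in>set (vl w). ?W (r ++ v))"
    proof (rule marg_eq_sum_map_add[OF \<open>dom r = X\<close>])
      show "\<forall>v\<in>set (vl w). dom v = Y \<and> v |` (X \<inter> Y) = r |` (X \<inter> Y)"
        using fibre_supp(2)[OF w] unfolding w_def by auto
      show "dom t = X \<union> Y \<and> t |` Y \<in> set (vl w)" if "?W t \<noteq> 0" and "t |` X = r" for t
        using fibrewise_join_neq_0D[OF that(1)] that(2) unfolding w_def by auto
    qed simp
    also have "\<dots> = (\<Sum>v\<in>set (vl w). xs w r v)"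
      using fibre_supp(2)[OF w] w r \<open>dom r = X\<close>
      by (intro sum.cong refl fibrewise_join_map_add) (auto simp: w_def)
    also have "\<dots> = R r"
    proof -
      have "distinct (vl w)" and "(\<Sum>v\<leftarrow>vl w. xs w r v) = R r"
        using fibres w r unfolding enumerates_def by auto
      then show ?thesis by (simp add: sum_list_distinct_conv_sum_set)
    qed
    finally show ?thesis .
  qed
qed

lemma marg_restrict_neq_0:
  assumes "positive_monoid TYPE('k::comm_monoid_add)" and "finite (supp R)" and "(R :: _ \<Rightarrow> 'k) r \<noteq> 0"
  shows "marg R Z (r |` Z) \<noteq> 0"
  using assms(3) positive_sum_eq_0_iff[OF assms(1), of "{t \<in> supp R. t |` Z = r |` Z}" R] assms(2)
  unfolding marg_def supp_def by auto

lemma nwc_join_margins: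
  assumes P: "positive_monoid TYPE('k::comm_monoid_add)" and WC: "weakly_cancellative TYPE('k)"
    and R: "is_krel D X R" and S: "is_krel D Y (S :: _ \<Rightarrow> 'k)"
    and consistent: "marg R (X \<inter> Y) = marg S (X \<inter> Y)"
    and "nwc_join X Y R S W"
  shows "marg W X = R \<and> marg W Y = S"
proof -
  let ?Ws = "supp (marg R (X \<inter> Y))"
  obtain ul vl xs where fibres: "\<forall>w\<in>?Ws.
      enumerates R (X \<inter> Y) w (ul w) \<and> enumerates S (X \<inter> Y) w (vl w) \<and>
      nwc (map (\<lambda>u. (u, R u)) (ul w)) (map (\<lambda>v. (v, S v)) (vl w)) (xs w)"
    and W: "W = fibrewise_join X Y ?Ws ul vl xs"
    using \<open>nwc_join X Y R S W\<close> unfolding nwc_join_iff_fibrewise_join by blast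
  have margins: "\<forall>w\<in>?Ws. enumerates R (X \<inter> Y) w (ul w) \<and> enumerates S (X \<inter> Y) w (vl w) \<and>
      (\<forall>u\<in>set (ul w). (\<Sum>v\<leftarrow>vl w. xs w u v) = R u) \<and> (\<forall>v\<in>set (vl w). (\<Sum>u\<leftarrow>ul w. xs w u v) = S v)"
    using fibres fibre_nwc_has_margins[OF P WC consistent] by blast
  have covers: "r |` (X \<inter> Y) \<in> ?Ws" if "R r \<noteq> 0 \<or> S r \<noteq> 0" for r
  proof -
    have "finite (supp R)" and "finite (supp S)" using R S unfolding is_krel_def by auto
    then have "marg R (X \<inter> Y) (r |` (X \<inter> Y)) \<noteq> 0 \<or> marg S (X \<inter> Y) (r |` (X \<inter> Y)) \<noteq> 0"
      using that marg_restrict_neq_0[OF P] by blast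
    then show ?thesis using consistent unfolding supp_def by auto
  qed
  have left: "marg W X = R"
    unfolding W by (rule marg_fibrewise_join[OF R S]) (use margins covers in auto)
  have "marg (fibrewise_join Y X ?Ws vl ul (\<lambda>w v u. xs w u v)) Y = S"
    by (rule marg_fibrewise_join[OF S R]) (use margins covers in \<open>auto simp: Int_commute\<close>)
  then have right: "marg W Y = S"
    unfolding W fibrewise_join_swap[of X Y] .
  from left right show ?thesis ..
qed

theorem proposition24:
  fixes D :: "'a \<Rightarrow> 'v set" and X Y :: "'a set"
    and R S :: "('a \<rightharpoonup> 'v) \<Rightarrow> 'k::comm_monoid_add"
  assumes "positive_monoid TYPE('k)"
    and "weakly_cancellative TYPE('k)"
    and "totally_canon_preordered TYPE('k)"
    and "finite X" and "finite Y"
    and "is_krel D X R" and "is_krel D Y S"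
    and "marg R (X \<inter> Y) = marg S (X \<inter> Y)"
  shows "(\<forall>w\<in>supp (marg R (X \<inter> Y)). \<forall>us vs.
            enumerates R (X \<inter> Y) w us \<longrightarrow> enumerates S (X \<inter> Y) w vs \<longrightarrow>
            (\<exists>x. nwc (map (\<lambda>u. (u, R u)) us) (map (\<lambda>v. (v, S v)) vs) x))
       \<and> (\<forall>W. nwc_join X Y R S W \<longrightarrow> marg W X = R \<and> marg W Y = S)"
  using fibre_nwc_exists[OF assms(1-3,8)] nwc_join_margins[OF assms(1,2,6-8)] by blast

end
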